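(* Let $F$ be a field of characteristic $2$ with subfield of squares $F^2$. The map $F\times F\to W_{ssq}(F)$, $(\alpha,\alpha')\mapsto$ Witt class of $\langle\alpha\,|\,\alpha'\rangle$, induces a well-defined group homomorphism $$\Phi\colon F\otimes_{F^2}F\to W_{ssq}(F),\qquad \alpha\otimes\alpha'\mapsto\langle\alpha\,|\,\alpha'\rangle,$$ and $\Phi$ is an isomorphism of groups.
   Context: Let $F$ be a field of characteristic $2$. A separated symplectic quadratic space over $F$ is a triple $(V,q,q')$ where $V$ is a finite-dimensional $F$-vector space, $q$ is a totally singular quadratic form on $V$ and $q'$ is a totally singular quadratic form on the dual space $V^*$ (a quadratic form $Q$ is totally singular if $Q(x+y)=Q(x)+Q(y)$ for all $x,y$). Two such spaces $(V_1,q_1,q_1')$, $(V_2,q_2,q_2')$ are isometric if there is a linear isomorphism $L\colon V_1\to V_2$ with $q_2\circ L=q_1$ and $q_1'\circ L^*=q_2'$ ($L^*$ the dual map). Orthogonal sum: $(V_1\oplus V_2,q_1\perp q_2,q_1'\perp q_2')$ using $(V_1\oplus V_2)^*=V_1^*\oplus V_2^*$. For a subspace $U\subset V$, $U^{o}=\{\varphi\in V^*:\varphi(U)=0\}$. The space is metabolic if there exists a subspace $U\subset V$ (of any dimension) with $q(U)=\{0\}$ and $q'(U^o)=\{0\}$. $W_{ssq}(F)$ is the Witt group of separated symplectic quadratic spaces: isometry classes modulo $\varphi\sim\psi$ iff $\varphi\perp\mu\simeq\psi\perp\mu'$ for metabolic $\mu,\mu'$, with operation induced by orthogonal sum. For $\alpha,\alpha'\in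 F$, $\langle\alpha\,|\,\alpha'\rangle$ is the one-dimensional space $(F,q,q')$ with $q(1)=\alpha$ and $q'(1^* )=\alpha'$, where $1^*$ is the dual basis vector of $1$. *)

theory Defs
  imports Main "HOL-Algebra.Group"
begin

text \<open>A finite-dimensional F-vector space V of dimension n is modelled as F^n,
  i.e. functions nat => F vanishing from index n on.  Its dual space V^* is
  identified with F^n via the dual basis, i.e. via the standard pairing.\<close>

definition vecs :: "nat \<Rightarrow> (nat \<Rightarrow> 'a::field) set" where
  "vecs n = {x. \<forall>i\<ge>n. x i = 0}"

definition pairing :: "nat \<Rightarrow> (nat \<Rightarrow> 'a::field) \<Rightarrow> (nat \<Rightarrow> 'a) \<Rightarrow> 'a" where
  "pairing n \<phi> x = (\<Sum>i<n. \<phi> i * x i)"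

text \<open>Totally singular quadratic form on F^n: Q(c x) = c^2 Q(x) and
  Q(x+y) = Q(x) + Q(y) (so the polar bilinear form vanishes).\<close>
definition ts_qform :: "nat \<Rightarrow> ((nat \<Rightarrow> 'a::field) \<Rightarrow> 'a) \<Rightarrow> bool" where
  "ts_qform n Q \<longleftrightarrow>
     (\<forall>x\<in>vecs n. \<forall>c. Q (\<lambda>i. c * x i) = c * c * Q x) \<and>
     (\<forall>x\<in>vecs n. \<forall>y\<in>vecs n. Q (\<lambda>i. x i + y i) = Q x + Q y)"

text \<open>A separated symplectic quadratic space (V,q,q'): dim V, q on V, q' on V^*.\<close>
record 'a ssq_space =
  sdim :: nat
  sq :: "(nat \<Rightarrow> 'a) \<Rightarrow> 'a"
  sq' :: "(nat \<Rightarrow> 'a) \<Rightarrow> 'a"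

definition is_ssq :: "'a::field ssq_space \<Rightarrow> bool" where
  "is_ssq S \<longleftrightarrow> ts_qform (sdim S) (sq S) \<and> ts_qform (sdim S) (sq' S)"

definition matapp :: "nat \<Rightarrow> (nat \<Rightarrow> nat \<Rightarrow> 'a::field) \<Rightarrow> (nat \<Rightarrow> 'a) \<Rightarrow> (nat \<Rightarrow> 'a)" where
  "matapp n M x = (\<lambda>i. if i < n then (\<Sum>j<n. M i j * x j) else 0)"

definition matdual :: "nat \<Rightarrow> (nat \<Rightarrow> nat \<Rightarrow> 'a::field) \<Rightarrow> (nat \<Rightarrow> 'a) \<Rightarrow> (nat \<Rightarrow> 'a)" where
  "matdual n M \<phi> = (\<lambda>j. if j < n then (\<Sum>i<n. M i j * \<phi> i) else 0)"

definition ssq_isometric :: "'a::field ssq_space \<Rightarrow> 'a ssq_space \<Rightarrow> bool" where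
  "ssq_isometric S T \<longleftrightarrow> sdim S = sdim T \<and>
     (\<exists>M. bij_betw (matapp (sdim S) M) (vecs (sdim S)) (vecs (sdim T)) \<and>
          (\<forall>x\<in>vecs (sdim S). sq T (matapp (sdim S) M x) = sq S x) \<and>
          (\<forall>\<phi>\<in>vecs (sdim T). sq' S (matdual (sdim S) M \<phi>) = sq' T \<phi>))"

definition vleft :: "nat \<Rightarrow> (nat \<Rightarrow> 'a::field) \<Rightarrow> (nat \<Rightarrow> 'a)" where
  "vleft n1 x = (\<lambda>i. if i < n1 then x i else 0)"

definition vright :: "nat \<Rightarrow> nat \<Rightarrow> (nat \<Rightarrow> 'a::field) \<Rightarrow> (nat \<Rightarrow> 'a)" where
  "vright n1 n2 x = (\<lambda>i. if i < n2 then x (n1 + i) else 0)"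

definition ssq_orth :: "'a::field ssq_space \<Rightarrow> 'a ssq_space \<Rightarrow> 'a ssq_space" where
  "ssq_orth S T = \<lparr> sdim = sdim S + sdim T,
      sq = (\<lambda>x. sq S (vleft (sdim S) x) + sq T (vright (sdim S) (sdim T) x)),
      sq' = (\<lambda>\<phi>. sq' S (vleft (sdim S) \<phi>) + sq' T (vright (sdim S) (sdim T) \<phi>)) \<rparr>"

definition annihilator :: "nat \<Rightarrow> (nat \<Rightarrow> 'a::field) set \<Rightarrow> (nat \<Rightarrow> 'a) set" where
  "annihilator n U = {\<phi>\<in>vecs n. \<forall>u\<in>U. pairing n \<phi> u = 0}"

definition is_subspace :: "nat \<Rightarrow> (nat \<Rightarrow> 'a::field) set \<Rightarrow> bool" where
  "is_subspace n U \<longleftrightarrow> U \<subseteq> vecs n \<and> (\<lambda>i. 0) \<in> U \<and>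
     (\<forall>x\<in>U. \<forall>y\<in>U. (\<lambda>i. x i + y i) \<in> U) \<and> (\<forall>x\<in>U. \<forall>c. (\<lambda>i. c * x i) \<in> U)"

definition ssq_metabolic :: "'a::field ssq_space \<Rightarrow> bool" where
  "ssq_metabolic S \<longleftrightarrow> (\<exists>U. is_subspace (sdim S) U \<and> (\<forall>u\<in>U. sq S u = 0) \<and>
      (\<forall>\<phi>\<in>annihilator (sdim S) U. sq' S \<phi> = 0))"

definition witt_equiv :: "'a::field ssq_space \<Rightarrow> 'a ssq_space \<Rightarrow> bool" where
  "witt_equiv S T \<longleftrightarrow> (\<exists>M M'. is_ssq M \<and> is_ssq M' \<and> ssq_metabolic M \<and> ssq_metabolic M' \<and>
      ssq_isometric (ssq_orth S M) (ssq_orth T M'))"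

definition witt_class :: "'a::field ssq_space \<Rightarrow> 'a ssq_space set" where
  "witt_class S = {T. is_ssq T \<and> witt_equiv S T}"

definition zero_space :: "'a::field ssq_space" where
  "zero_space = \<lparr> sdim = 0, sq = (\<lambda>x. 0), sq' = (\<lambda>x. 0) \<rparr>"

definition Wssq :: "'a::field itself \<Rightarrow> 'a ssq_space set monoid" where
  "Wssq _ = \<lparr> carrier = {witt_class S | S. is_ssq S},
      mult = (\<lambda>X Y. \<Union>{witt_class (ssq_orth S T) | S T. S \<in> X \<and> T \<in> Y}),
      one = witt_class zero_space \<rparr>"

definition onedim :: "'a::field \<Rightarrow> 'a \<Rightarrow> 'a ssq_space" where
  "onedim a a' = \<lparr> sdim = 1, sq = (\<lambda>x. a * (x 0 * x 0)), sq' = (\<lambda>\<phi>. a' * (\<phi> 0 * \<phi> 0)) \<rparr>"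

text \<open>Free abelian group on F x F: finitely supported integer-valued functions.
  Relations: biadditivity and (s^2 a) (x) c = a (x) (s^2 c).\<close>
definition gen :: "'a \<Rightarrow> 'a \<Rightarrow> ('a \<times> 'a \<Rightarrow> int)" where
  "gen a c = (\<lambda>p. if p = (a, c) then 1 else 0)"

inductive_set tens_rel :: "('a::field \<times> 'a \<Rightarrow> int) set" where
  ladd: "(\<lambda>p. gen (a + b) c p - gen a c p - gen b c p) \<in> tens_rel"
| radd: "(\<lambda>p. gen a (c + d) p - gen a c p - gen a d p) \<in> tens_rel"
| bal: "(\<lambda>p. gen (s * s * a) c p - gen a (s * s * c) p) \<in> tens_rel"
| zero: "(\<lambda>p. 0) \<in> tens_rel"
| add: "f \<in> tens_rel \<Longrightarrow> g \<in> tens_rel \<Longrightarrow> (\<lambda>p. f p + g p) \<in> tens_rel"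
| neg: "f \<in> tens_rel \<Longrightarrow> (\<lambda>p. - f p) \<in> tens_rel"

definition fin_supp :: "('a \<times> 'a \<Rightarrow> int) \<Rightarrow> bool" where
  "fin_supp f \<longleftrightarrow> finite {p. f p \<noteq> 0}"

definition tclass :: "('a::field \<times> 'a \<Rightarrow> int) \<Rightarrow> ('a \<times> 'a \<Rightarrow> int) set" where
  "tclass f = {g. fin_supp g \<and> (\<lambda>p. f p - g p) \<in> tens_rel}"

definition tensor_grp :: "'a::field itself \<Rightarrow> ('a \<times> 'a \<Rightarrow> int) set monoid" where
  "tensor_grp _ = \<lparr> carrier = {tclass f | f. fin_supp f},
      mult = (\<lambda>X Y. {(\<lambda>p. f p + g p) | f g. f \<in> X \<and> g \<in> Y}),
      one = tclass (\<lambda>p. 0) \<rparr>"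

definition pure_tensor :: "'a::field \<Rightarrow> 'a \<Rightarrow> ('a \<times> 'a \<Rightarrow> int) set" where
  "pure_tensor a c = tclass (gen a c)"

end

theory Submission
  imports Defs "HOL-Combinatorics.List_Permutation"
begin

text \<open>Every totally singular form is diagonal, \<open>q(x) = \<Sum>\<^sub>i q(e\<^sub>i) x\<^sub>i\<^sup>2\<close>, so a space is
  recorded by its coefficient pairs \<open>(q(e\<^sub>i), q'(e\<^sub>i\<^sup>*))\<close>, and the inverse of \<open>\<Phi>\<close> sends it to
  \<open>\<Sum>\<^sub>i q(e\<^sub>i) \<otimes> q'(e\<^sub>i\<^sup>*)\<close>. This tensor is an isometry invariant, because an isometry changes
  the coefficients by squares of matrix entries, which the relation \<open>s\<^sup>2a \<otimes> c = a \<otimes> s\<^sup>2c\<close>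
  moves across the tensor sign. It vanishes on metabolic spaces: an isotropic vector \<open>v\<close> with
  \<open>v\<^sub>k = 1\<close> gives \<open>q(e\<^sub>k) = \<Sum>\<^sub>i v\<^sub>i\<^sup>2 q(e\<^sub>i)\<close> over \<open>i \<noteq> k\<close>, which splits off the \<open>k\<close>-th coordinate and
  leaves a metabolic space of smaller dimension. Conversely, each defining relation of
  \<open>F \<otimes>\<^bsub>F\<^sup>2\<^esub> F\<close> is the invariant of a metabolic diagonal space, and spaces with the same multiset
  of coefficient pairs are isometric by a permutation, so Witt equivalence is exactly equality of
  invariants. Characteristic 2 enters through \<open>(x + y)\<^sup>2 = x\<^sup>2 + y\<^sup>2\<close>, which makes diagonal forms
  totally singular, and through \<open>a \<otimes> c = - (a \<otimes> c)\<close>, which makes every tensor the invariant of a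
  diagonal space.\<close>

definition tens_equiv :: "('a::field \<times> 'a \<Rightarrow> int) \<Rightarrow> ('a \<times> 'a \<Rightarrow> int) \<Rightarrow> bool" where
  "tens_equiv f g \<longleftrightarrow> (\<lambda>p. f p - g p) \<in> tens_rel"

lemma tens_equiv_refl: "tens_equiv f f"
  using tens_rel.zero by (simp add: tens_equiv_def)

lemma tens_equiv_sym: "tens_equiv f g \<Longrightarrow> tens_equiv g f"
  unfolding tens_equiv_def by (drule tens_rel.neg) simp

lemma tens_equiv_trans [trans]: "tens_equiv f g \<Longrightarrow> tens_equiv g h \<Longrightarrow> tens_equiv f h"
  unfolding tens_equiv_def by (drule (1) tens_rel.add) simp

lemma tens_equiv_add:
  "tens_equiv f g \<Longrightarrow> tens_equiv f' g' \<Longrightarrow> tens_equiv (\<lambda>p. f p + f' p) (\<lambda>p. g p + g' p)"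
  unfolding tens_equiv_def by (drule (1) tens_rel.add) (simp add: algebra_simps)

lemma tens_equiv_sum:
  assumes "finite I" and "\<And>i. i \<in> I \<Longrightarrow> tens_equiv (f i) (g i)"
  shows "tens_equiv (\<lambda>p. \<Sum>i\<in>I. f i p) (\<lambda>p. \<Sum>i\<in>I. g i p)"
  using assms by (induction I rule: finite_induct) (simp_all add: tens_equiv_refl tens_equiv_add)

lemma gen_add_left: "tens_equiv (gen (a + b) c) (\<lambda>p. gen a c p + gen b c p)"
  using tens_rel.ladd[of a b c] by (simp add: tens_equiv_def algebra_simps)

lemma gen_add_right: "tens_equiv (gen a (c + d)) (\<lambda>p. gen a c p + gen a d p)"
  using tens_rel.radd[of a c d] by (simp add: tens_equiv_def algebra_simps)

lemma gen_square_swap: "tens_equiv (gen (s * s * a) c) (gen a (s * s * c))"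
  using tens_rel.bal[of s a c] by (simp add: tens_equiv_def)

lemma gen_zero_left: "tens_equiv (gen 0 c) (\<lambda>p. 0)"
  using tens_equiv_sym[OF gen_add_left[of 0 0 c]] by (simp add: tens_equiv_def)

lemma gen_zero_right: "tens_equiv (gen a 0) (\<lambda>p. 0)"
  using tens_equiv_sym[OF gen_add_right[of a 0 0]] by (simp add: tens_equiv_def)

lemma gen_sum_left:
  "finite I \<Longrightarrow> tens_equiv (gen (\<Sum>i\<in>I. a i) c) (\<lambda>p. \<Sum>i\<in>I. gen (a i) c p)"
proof (induction I rule: finite_induct)
  case empty
  then show ?case using gen_zero_left by simp
next
  case (insert x F)
  have "tens_equiv (gen (a x + sum a F) c) (\<lambda>p. gen (a x) c p + gen (sum a F) c p)"
    by (rule gen_add_left)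
  also have "tens_equiv \<dots> (\<lambda>p. gen (a x) c p + (\<Sum>i\<in>F. gen (a i) c p))"
    by (rule tens_equiv_add[OF tens_equiv_refl insert.IH])
  finally show ?case using insert by simp
qed

lemma gen_sum_right:
  "finite I \<Longrightarrow> tens_equiv (gen a (\<Sum>i\<in>I. c i)) (\<lambda>p. \<Sum>i\<in>I. gen a (c i) p)"
proof (induction I rule: finite_induct)
  case empty
  then show ?case using gen_zero_right by simp
next
  case (insert x F)
  have "tens_equiv (gen a (c x + sum c F)) (\<lambda>p. gen a (c x) p + gen a (sum c F) p)"
    by (rule gen_add_right)
  also have "tens_equiv \<dots> (\<lambda>p. gen a (c x) p + (\<Sum>i\<in>F. gen a (c i) p))"
    by (rule tens_equiv_add[OF tens_equiv_refl insert.IH])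
  finally show ?case using insert by simp
qed

lemma char2_add_self: "(2::'a::field) = 0 \<Longrightarrow> (x::'a) + x = 0"
  by (metis mult_2 mult_zero_left)

lemma char2_add_eq_0_iff: "(2::'a::field) = 0 \<Longrightarrow> (x::'a) + y = 0 \<longleftrightarrow> x = y"
  by (metis add_eq_0_iff char2_add_self)

lemma char2_square_add: "(2::'a::field) = 0 \<Longrightarrow> ((x::'a) + y) * (x + y) = x * x + y * y"
  using char2_add_self[of "x * y"] by (simp add: algebra_simps)

lemma char2_square_sum:
  assumes "(2::'a::field) = 0" and "finite I"
  shows "(\<Sum>i\<in>I. f i) * (\<Sum>i\<in>I. f i) = (\<Sum>i\<in>I. f i * (f i :: 'a))"
  using assms(2) by (induction I rule: finite_induct) (simp_all add: char2_square_add[OF assms(1)])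

lemma gen_double:
  assumes "(2::'a::field) = 0"
  shows "tens_equiv (\<lambda>p. gen (a::'a) c p + gen a c p) (\<lambda>p. 0)"
proof -
  have "tens_equiv (\<lambda>p. gen a c p + gen a c p) (gen (a + a) c)"
    by (rule tens_equiv_sym[OF gen_add_left])
  then show ?thesis
    using gen_zero_left[of c] char2_add_self[OF assms, of a] by (metis tens_equiv_trans)
qed

definition unit_vec :: "nat \<Rightarrow> nat \<Rightarrow> 'a::field" where
  "unit_vec k = (\<lambda>j. if j = k then 1 else 0)"

lemma unit_vec_in_vecs: "k < n \<Longrightarrow> unit_vec k \<in> vecs n"
  by (simp add: unit_vec_def vecs_def)

lemma sum_mult_unit_vec: "j < n \<Longrightarrow> (\<Sum>k<n. f k * unit_vec j k) = (f j :: 'a::field)"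
  by (simp add: unit_vec_def if_distrib cong: if_cong)

lemma ts_qform_scale: "ts_qform n Q \<Longrightarrow> x \<in> vecs n \<Longrightarrow> Q (\<lambda>i. c * x i) = c * c * Q x"
  unfolding ts_qform_def by blast

lemma ts_qform_add: "ts_qform n Q \<Longrightarrow> x \<in> vecs n \<Longrightarrow> y \<in> vecs n \<Longrightarrow> Q (\<lambda>i. x i + y i) = Q x + Q y"
  unfolding ts_qform_def by blast

lemma ts_qform_zero: "ts_qform n Q \<Longrightarrow> Q (\<lambda>i. 0) = 0"
  using ts_qform_scale[of n Q "\<lambda>i. 0" 0] by (simp add: vecs_def)

lemma ts_qform_diagonal:
  assumes Q: "ts_qform n Q" and x: "x \<in> vecs n"
  shows "Q x = (\<Sum>i<n. Q (unit_vec i) * (x i * x i))"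
proof -
  have "Q (\<lambda>i. if i < k then x i else 0) = (\<Sum>i<k. Q (unit_vec i) * (x i * x i))" if "k \<le> n" for k
    using that
  proof (induction k)
    case 0
    then show ?case using ts_qform_zero[OF Q] by simp
  next
    case (Suc k)
    let ?y = "\<lambda>i. if i < k then x i else 0" and ?z = "\<lambda>i. x k * unit_vec k i"
    have e: "unit_vec k \<in> vecs n" using Suc.prems by (simp add: unit_vec_in_vecs)
    have "(\<lambda>i. if i < Suc k then x i else 0) = (\<lambda>i. ?y i + ?z i)"
      by (auto simp: unit_vec_def fun_eq_iff less_Suc_eq)
    moreover have "Q (\<lambda>i. ?y i + ?z i) = Q ?y + Q ?z"
      using x e by (intro ts_qform_add[OF Q]) (auto simp: vecs_def)
    moreover have "Q ?z = x k * x k * Q (unit_vec k)"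
      by (rule ts_qform_scale[OF Q e])
    ultimately show ?case using Suc by (simp add: algebra_simps)
  qed
  moreover have "(\<lambda>i. if i < n then x i else 0) = x"
    using x by (auto simp: vecs_def)
  ultimately show ?thesis by (metis order_refl)
qed

definition diag_coeff :: "'a::field ssq_space \<Rightarrow> nat \<Rightarrow> 'a" where
  "diag_coeff S i = sq S (unit_vec i)"

definition diag_coeff' :: "'a::field ssq_space \<Rightarrow> nat \<Rightarrow> 'a" where
  "diag_coeff' S i = sq' S (unit_vec i)"

lemma sq_diagonal:
  "is_ssq S \<Longrightarrow> x \<in> vecs (sdim S) \<Longrightarrow> sq S x = (\<Sum>i<sdim S. diag_coeff S i * (x i * x i))"
  unfolding is_ssq_def diag_coeff_def by (blast intro: ts_qform_diagonal)

lemma sq'_diagonal: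
  "is_ssq S \<Longrightarrow> \<phi> \<in> vecs (sdim S) \<Longrightarrow> sq' S \<phi> = (\<Sum>i<sdim S. diag_coeff' S i * (\<phi> i * \<phi> i))"
  unfolding is_ssq_def diag_coeff'_def by (blast intro: ts_qform_diagonal)

definition coeff_list :: "'a::field ssq_space \<Rightarrow> ('a \<times> 'a) list" where
  "coeff_list S = map (\<lambda>i. (diag_coeff S i, diag_coeff' S i)) [0..<sdim S]"

definition gen_count :: "('a \<times> 'a) list \<Rightarrow> ('a \<times> 'a \<Rightarrow> int)" where
  "gen_count L = (\<lambda>p. int (count (mset L) p))"

text \<open>The formal sum \<open>\<Sum>\<^sub>i q(e\<^sub>i) \<otimes> q'(e\<^sub>i\<^sup>*)\<close>, before passing to the tensor product.\<close>
definition tens_inv :: "'a::field ssq_space \<Rightarrow> ('a \<times> 'a \<Rightarrow> int)" where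
  "tens_inv S = gen_count (coeff_list S)"

lemma gen_count_append: "gen_count (L @ L') = (\<lambda>p. gen_count L p + gen_count L' p)"
  by (simp add: gen_count_def fun_eq_iff)

lemma gen_count_single: "gen_count [x] = gen (fst x) (snd x)"
  by (auto simp: gen_count_def gen_def fun_eq_iff)

lemma gen_count_map_upt:
  "gen_count (map f [0..<n]) = (\<lambda>p. \<Sum>i<n. gen (fst (f i)) (snd (f i)) p)"
  by (induction n) (simp_all add: gen_count_append gen_count_single, simp add: gen_count_def)

lemma tens_inv_eq_sum: "tens_inv S = (\<lambda>p. \<Sum>i<sdim S. gen (diag_coeff S i) (diag_coeff' S i) p)"
  by (simp add: tens_inv_def coeff_list_def gen_count_map_upt)

section \<open>Invariance under isometries\<close>

lemma matapp_in_vecs: "matapp n M x \<in> vecs n"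
  by (simp add: matapp_def vecs_def)

lemma matdual_in_vecs: "matdual n M \<phi> \<in> vecs n"
  by (simp add: matdual_def vecs_def)

lemma isometric_diag_coeff:
  assumes S: "is_ssq S" and T: "is_ssq T" and "ssq_isometric S T"
  obtains M where "sdim T = sdim S"
    and "\<And>j. j < sdim S \<Longrightarrow> diag_coeff S j = (\<Sum>i<sdim S. M i j * M i j * diag_coeff T i)"
    and "\<And>k. k < sdim S \<Longrightarrow> diag_coeff' T k = (\<Sum>j<sdim S. M k j * M k j * diag_coeff' S j)"
proof -
  let ?n = "sdim S"
  from assms(3) obtain M where n: "sdim T = ?n"
    and q: "\<forall>x\<in>vecs ?n. sq T (matapp ?n M x) = sq S x"
    and q': "\<forall>\<phi>\<in>vecs ?n. sq' S (matdual ?n M \<phi>) = sq' T \<phi>"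
    unfolding ssq_isometric_def by auto
  have "diag_coeff S j = (\<Sum>i<?n. M i j * M i j * diag_coeff T i)" if j: "j < ?n" for j
  proof -
    have col: "matapp ?n M (unit_vec j) = (\<lambda>i. if i < ?n then M i j else 0)"
      using j by (simp add: matapp_def sum_mult_unit_vec cong: if_cong)
    have "diag_coeff S j = sq T (matapp ?n M (unit_vec j))"
      using q[rule_format, OF unit_vec_in_vecs[OF j]] by (simp add: diag_coeff_def)
    also have "\<dots> = (\<Sum>i<?n. diag_coeff T i * (matapp ?n M (unit_vec j) i * matapp ?n M (unit_vec j) i))"
      using sq_diagonal[OF T matapp_in_vecs[of ?n, folded n]] by (simp only: n)
    also have "\<dots> = (\<Sum>i<?n. M i j * M i j * diag_coeff T i)"
      unfolding col by (intro sum.cong) simp_all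
    finally show ?thesis .
  qed
  moreover have "diag_coeff' T k = (\<Sum>j<?n. M k j * M k j * diag_coeff' S j)" if k: "k < ?n" for k
  proof -
    have row: "matdual ?n M (unit_vec k) = (\<lambda>j. if j < ?n then M k j else 0)"
      using k by (simp add: matdual_def sum_mult_unit_vec cong: if_cong)
    have "diag_coeff' T k = sq' S (matdual ?n M (unit_vec k))"
      using q'[rule_format, OF unit_vec_in_vecs[OF k]] by (simp add: diag_coeff'_def)
    also have "\<dots> = (\<Sum>j<?n. diag_coeff' S j * (matdual ?n M (unit_vec k) j * matdual ?n M (unit_vec k) j))"
      by (rule sq'_diagonal[OF S matdual_in_vecs])
    also have "\<dots> = (\<Sum>j<?n. M k j * M k j * diag_coeff' S j)"
      unfolding row by (intro sum.cong) simp_all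
    finally show ?thesis .
  qed
  ultimately show ?thesis using n that by blast
qed

text \<open>The coefficients transform by squares of matrix entries, which the balancing relation moves
  across the tensor sign.\<close>
lemma tens_inv_isometric:
  assumes S: "is_ssq S" and T: "is_ssq T" and "ssq_isometric S T"
  shows "tens_equiv (tens_inv S) (tens_inv T)"
proof -
  let ?n = "sdim S"
  obtain M where n: "sdim T = ?n"
    and a: "\<And>j. j < ?n \<Longrightarrow> diag_coeff S j = (\<Sum>i<?n. M i j * M i j * diag_coeff T i)"
    and a': "\<And>i. i < ?n \<Longrightarrow> diag_coeff' T i = (\<Sum>j<?n. M i j * M i j * diag_coeff' S j)"
    using isometric_diag_coeff[OF assms] by blast
  have eS: "tens_inv S = (\<lambda>p. \<Sum>j<?n. gen (\<Sum>i<?n. M i j * M i j * diag_coeff T i) (diag_coeff' S j) p)"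
    unfolding tens_inv_eq_sum by (intro ext sum.cong) (simp_all add: a)
  have eT: "tens_inv T = (\<lambda>p. \<Sum>i<?n. gen (diag_coeff T i) (\<Sum>j<?n. M i j * M i j * diag_coeff' S j) p)"
    unfolding tens_inv_eq_sum n by (intro ext sum.cong) (simp_all add: a')
  have "tens_equiv (tens_inv S)
      (\<lambda>p. \<Sum>j<?n. \<Sum>i<?n. gen (M i j * M i j * diag_coeff T i) (diag_coeff' S j) p)"
    unfolding eS by (intro tens_equiv_sum gen_sum_left) simp_all
  also have "tens_equiv \<dots> (\<lambda>p. \<Sum>j<?n. \<Sum>i<?n. gen (diag_coeff T i) (M i j * M i j * diag_coeff' S j) p)"
    by (intro tens_equiv_sum gen_square_swap) simp_all
  also have "\<dots> = (\<lambda>p. \<Sum>i<?n. \<Sum>j<?n. gen (diag_coeff T i) (M i j * M i j * diag_coeff' S j) p)"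
    by (rule ext, rule sum.swap)
  also have "tens_equiv \<dots> (tens_inv T)"
    unfolding eT by (intro tens_equiv_sum tens_equiv_sym[OF gen_sum_right]) simp_all
  finally show ?thesis .
qed

section \<open>Metabolic spaces have trivial invariant\<close>

definition supported_on :: "nat set \<Rightarrow> (nat \<Rightarrow> 'a::field) set" where
  "supported_on I = {x. \<forall>i. i \<notin> I \<longrightarrow> x i = 0}"

definition diag_form :: "nat set \<Rightarrow> (nat \<Rightarrow> 'a::field) \<Rightarrow> (nat \<Rightarrow> 'a) \<Rightarrow> 'a" where
  "diag_form I a x = (\<Sum>i\<in>I. a i * (x i * x i))"

definition dot :: "nat set \<Rightarrow> (nat \<Rightarrow> 'a::field) \<Rightarrow> (nat \<Rightarrow> 'a) \<Rightarrow> 'a" where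
  "dot I \<phi> x = (\<Sum>i\<in>I. \<phi> i * x i)"

definition diag_metabolizer ::
    "nat set \<Rightarrow> (nat \<Rightarrow> 'a::field) \<Rightarrow> (nat \<Rightarrow> 'a) \<Rightarrow> (nat \<Rightarrow> 'a) set \<Rightarrow> bool" where
  "diag_metabolizer I a a' U \<longleftrightarrow>
     U \<subseteq> supported_on I \<and> (\<forall>x\<in>U. \<forall>y\<in>U. (\<lambda>i. x i + y i) \<in> U) \<and> (\<forall>x\<in>U. \<forall>c. (\<lambda>i. c * x i) \<in> U) \<and>
     (\<forall>u\<in>U. diag_form I a u = 0) \<and>
     (\<forall>\<phi>\<in>supported_on I. (\<forall>u\<in>U. dot I \<phi> u = 0) \<longrightarrow> diag_form I a' \<phi> = 0)"

lemma diag_metabolizer_vanishing: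
  assumes "finite I" and "diag_metabolizer I a a' U" and "\<forall>u\<in>U. \<forall>k\<in>I. u k = 0" and "k \<in> I"
  shows "a' k = 0"
proof -
  have "unit_vec k \<in> supported_on I" and "\<forall>u\<in>U. dot I (unit_vec k) u = 0"
    using assms(3,4) by (auto simp: supported_on_def unit_vec_def dot_def)
  then have "diag_form I a' (unit_vec k) = 0"
    using assms(2) unfolding diag_metabolizer_def by blast
  then show ?thesis
    using assms(1,4) by (simp add: diag_form_def unit_vec_def if_distrib cong: if_cong)
qed

text \<open>Every \<open>w \<in> U\<close> is \<open>w k \<cdot> v\<close> plus a vector of \<open>U\<close> vanishing at \<open>k\<close>.\<close>
lemma diag_metabolizer_annihilator_extend:
  assumes "finite I" and U: "diag_metabolizer I a a' U" and k: "k \<in> I" and v: "v \<in> U" "v k = 1"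
    and \<psi>: "\<forall>x\<in>U. x k = 0 \<longrightarrow> dot (I - {k}) \<psi> x = 0" and w: "w \<in> U"
  shows "dot I (\<psi>(k := - dot (I - {k}) \<psi> v)) w = 0"
proof -
  let ?I = "I - {k}" and ?t = "dot (I - {k}) \<psi> v"
  have closed: "\<forall>x\<in>U. \<forall>y\<in>U. (\<lambda>i. x i + y i) \<in> U" "\<forall>x\<in>U. \<forall>c. (\<lambda>i. c * x i) \<in> U"
    using U by (simp_all add: diag_metabolizer_def)
  have "(\<lambda>i. w i + (- w k) * v i) \<in> U"
    using closed(1)[rule_format, OF w closed(2)[rule_format, OF v(1)]] .
  then have "dot ?I \<psi> (\<lambda>i. w i + (- w k) * v i) = 0" using \<psi> v(2) by simp
  then have "dot ?I \<psi> w = w k * ?t"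
    by (simp add: dot_def algebra_simps sum.distrib sum_distrib_left sum_subtractf)
  moreover have "dot I (\<psi>(k := - ?t)) w = - ?t * w k + dot ?I \<psi> w"
    using assms(1) k by (simp add: dot_def sum.remove)
  ultimately show ?thesis by simp
qed

text \<open>Splitting off the coordinate \<open>k\<close> of an isotropic vector \<open>v\<close> with \<open>v k = 1\<close>; the dual
  coefficients change because \<open>U \<inter> {x. x k = 0}\<close> has the larger annihilator.\<close>
lemma diag_metabolizer_remove:
  assumes char2: "(2::'a::field) = 0" and "finite I"
    and U: "diag_metabolizer I a a' U" and k: "k \<in> I" and v: "v \<in> U" "v k = 1"
  shows "diag_metabolizer (I - {k}) a (\<lambda>i. a' i + v i * v i * a' k) {x\<in>U. x k = (0::'a)}"
proof -
  let ?I = "I - {k}"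
  have split: "sum g I = g k + sum g ?I" for g :: "nat \<Rightarrow> 'a"
    using assms(2) k by (simp add: sum.remove)
  have "diag_form ?I (\<lambda>i. a' i + v i * v i * a' k) \<psi> = 0"
    if \<psi>: "\<psi> \<in> supported_on ?I" and \<psi>0: "\<forall>x\<in>{x\<in>U. x k = 0}. dot ?I \<psi> x = 0" for \<psi>
  proof -
    let ?t = "dot ?I \<psi> v"
    have "\<forall>w\<in>U. dot I (\<psi>(k := - ?t)) w = 0"
      using diag_metabolizer_annihilator_extend[OF assms(2) U k v] \<psi>0 by simp
    moreover have "\<psi>(k := - ?t) \<in> supported_on I" using \<psi> k by (auto simp: supported_on_def)
    ultimately have "diag_form I a' (\<psi>(k := - ?t)) = 0"
      using U by (simp add: diag_metabolizer_def)
    moreover have "diag_form I a' (\<psi>(k := - ?t)) = a' k * (?t * ?t) + diag_form ?I a' \<psi>"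
      unfolding diag_form_def split by simp
    moreover have "?t * ?t = (\<Sum>i\<in>?I. \<psi> i * v i * (\<psi> i * v i))"
      unfolding dot_def using assms(2) by (simp add: char2_square_sum[OF char2])
    ultimately show ?thesis
      by (simp add: diag_form_def algebra_simps sum.distrib sum_distrib_left add.commute)
  qed
  moreover have "diag_form ?I a x = 0" if "x \<in> U" "x k = 0" for x
    using U that unfolding diag_metabolizer_def diag_form_def split by auto
  ultimately show ?thesis
    using U by (auto simp: diag_metabolizer_def supported_on_def)
qed

lemma tens_equiv_pivot:
  assumes "finite I" and "k \<in> I" and a: "a k = (\<Sum>i\<in>I - {k}. v i * v i * a i)"
  shows "tens_equiv (\<lambda>p. \<Sum>i\<in>I - {k}. gen (a i) (a' i + v i * v i * a' k) p)
                    (\<lambda>p. \<Sum>i\<in>I. gen (a i) (a' i) p)"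
proof -
  let ?I = "I - {k}"
  have fin: "finite ?I" using assms(1) by simp
  have "tens_equiv (\<lambda>p. \<Sum>i\<in>?I. gen (a i) (a' i + v i * v i * a' k) p)
      (\<lambda>p. \<Sum>i\<in>?I. gen (a i) (a' i) p + gen (v i * v i * a i) (a' k) p)"
    using fin
    by (intro tens_equiv_sum tens_equiv_trans[OF gen_add_right]
        tens_equiv_add[OF tens_equiv_refl tens_equiv_sym[OF gen_square_swap]])
  also have "\<dots> = (\<lambda>p. (\<Sum>i\<in>?I. gen (a i) (a' i) p) + (\<Sum>i\<in>?I. gen (v i * v i * a i) (a' k) p))"
    by (simp add: sum.distrib)
  also have "tens_equiv \<dots> (\<lambda>p. (\<Sum>i\<in>?I. gen (a i) (a' i) p) + gen (a k) (a' k) p)"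
    unfolding a using fin by (intro tens_equiv_add tens_equiv_refl tens_equiv_sym[OF gen_sum_left])
  also have "\<dots> = (\<lambda>p. \<Sum>i\<in>I. gen (a i) (a' i) p)"
    using assms(1,2) by (simp add: sum.remove add.commute)
  finally show ?thesis .
qed

lemma diag_metabolizer_tens_zero:
  assumes char2: "(2::'a::field) = 0"
  shows "finite I \<Longrightarrow> diag_metabolizer I a (a' :: nat \<Rightarrow> 'a) U \<Longrightarrow>
    tens_equiv (\<lambda>p. \<Sum>i\<in>I. gen (a i) (a' i) p) (\<lambda>p. 0)"
proof (induction "card I" arbitrary: I a' U rule: less_induct)
  case less
  show ?case
  proof (cases "\<exists>u\<in>U. \<exists>k\<in>I. u k \<noteq> 0")
    case False
    then have "a' k = 0" if "k \<in> I" for k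
      using diag_metabolizer_vanishing[OF less.prems] that by blast
    then have "tens_equiv (\<lambda>p. \<Sum>i\<in>I. gen (a i) (a' i) p) (\<lambda>p. \<Sum>i\<in>I. 0)"
      using less.prems(1) by (intro tens_equiv_sum) (simp_all add: gen_zero_right)
    then show ?thesis by simp
  next
    case True
    then obtain u k where u: "u \<in> U" and k: "k \<in> I" and "u k \<noteq> 0" by blast
    define v where "v = (\<lambda>i. inverse (u k) * u i)"
    have v: "v \<in> U" "v k = 1"
      using less.prems(2) u \<open>u k \<noteq> 0\<close> by (auto simp: v_def diag_metabolizer_def)
    have "diag_form I a v = 0"
      using less.prems(2) v by (simp add: diag_metabolizer_def)
    then have "a k + (\<Sum>i\<in>I - {k}. v i * v i * a i) = 0"
      using less.prems(1) k v(2) by (simp add: diag_form_def sum.remove mult_ac)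
    then have "tens_equiv (\<lambda>p. \<Sum>i\<in>I - {k}. gen (a i) (a' i + v i * v i * a' k) p)
        (\<lambda>p. \<Sum>i\<in>I. gen (a i) (a' i) p)"
      using less.prems(1) k by (intro tens_equiv_pivot) (simp_all add: char2_add_eq_0_iff[OF char2])
    moreover have "tens_equiv (\<lambda>p. \<Sum>i\<in>I - {k}. gen (a i) (a' i + v i * v i * a' k) p) (\<lambda>p. 0)"
      using less.hyps[OF _ _ diag_metabolizer_remove[OF char2 less.prems k v]] less.prems(1) k
      by (simp add: card_Diff1_less del: card_Diff_insert)
    ultimately show ?thesis by (blast intro: tens_equiv_trans tens_equiv_sym)
  qed
qed

lemma metabolic_tens_inv:
  assumes char2: "(2::'a::field) = 0" and S: "is_ssq (S :: 'a ssq_space)" and "ssq_metabolic S"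
  shows "tens_equiv (tens_inv S) (\<lambda>p. 0)"
proof -
  let ?n = "sdim S"
  obtain U where U: "is_subspace ?n U" "\<forall>u\<in>U. sq S u = 0" "\<forall>\<phi>\<in>annihilator ?n U. sq' S \<phi> = 0"
    using assms(3) by (auto simp: ssq_metabolic_def)
  have vecs: "supported_on {..<?n} = vecs ?n"
    by (auto simp: supported_on_def vecs_def)
  have "U \<subseteq> vecs ?n" and "\<forall>x\<in>U. \<forall>y\<in>U. (\<lambda>i. x i + y i) \<in> U" "\<forall>x\<in>U. \<forall>c. (\<lambda>i. c * x i) \<in> U"
    using U(1) by (auto simp: is_subspace_def)
  moreover have "diag_form {..<?n} (diag_coeff S) u = 0" if "u \<in> U" for u
    using U(2) sq_diagonal[OF S, of u] that \<open>U \<subseteq> vecs ?n\<close> by (auto simp: diag_form_def)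
  moreover have "diag_form {..<?n} (diag_coeff' S) \<phi> = 0"
    if "\<phi> \<in> vecs ?n" "\<forall>u\<in>U. dot {..<?n} \<phi> u = 0" for \<phi>
    using U(3) sq'_diagonal[OF S] that by (auto simp: annihilator_def diag_form_def dot_def pairing_def)
  ultimately have "diag_metabolizer {..<?n} (diag_coeff S) (diag_coeff' S) U"
    by (simp add: diag_metabolizer_def vecs)
  then show ?thesis
    using diag_metabolizer_tens_zero[OF char2] by (simp add: tens_inv_eq_sum)
qed

lemma sum_lessThan_add: "(\<Sum>i<m + (n::nat). f i) = (\<Sum>i<m. f i) + (\<Sum>i<n. f (m + i) :: 'a::comm_monoid_add)"
  by (induction n) (simp_all add: add.assoc)

lemma vleft_in_vecs: "vleft m x \<in> vecs m"
  by (simp add: vleft_def vecs_def)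

lemma vright_in_vecs: "vright m n x \<in> vecs n"
  by (simp add: vright_def vecs_def)

lemma vleft_linear:
  "vleft m (\<lambda>i. 0) = (\<lambda>i. 0)"
  "vleft m (\<lambda>i. c * x i) = (\<lambda>i. c * vleft m x i)"
  "vleft m (\<lambda>i. x i + y i) = (\<lambda>i. vleft m x i + vleft m y i)"
  by (auto simp: vleft_def)

lemma vright_linear:
  "vright m n (\<lambda>i. 0) = (\<lambda>i. 0)"
  "vright m n (\<lambda>i. c * x i) = (\<lambda>i. c * vright m n x i)"
  "vright m n (\<lambda>i. x i + y i) = (\<lambda>i. vright m n x i + vright m n y i)"
  by (auto simp: vright_def)

lemma ts_qform_orth:
  assumes "ts_qform m Q" "ts_qform n Q'"
  shows "ts_qform (m + n) (\<lambda>x. Q (vleft m x) + Q' (vright m n x))"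
  unfolding ts_qform_def
  by (simp add: vleft_linear vright_linear algebra_simps
      ts_qform_scale[OF assms(1) vleft_in_vecs] ts_qform_scale[OF assms(2) vright_in_vecs]
      ts_qform_add[OF assms(1) vleft_in_vecs vleft_in_vecs]
      ts_qform_add[OF assms(2) vright_in_vecs vright_in_vecs])

lemma sdim_ssq_orth [simp]: "sdim (ssq_orth S T) = sdim S + sdim T"
  by (simp add: ssq_orth_def)

lemma is_ssq_orth: "is_ssq S \<Longrightarrow> is_ssq T \<Longrightarrow> is_ssq (ssq_orth S T)"
  by (simp add: is_ssq_def ssq_orth_def ts_qform_orth)

lemma coeff_list_orth:
  assumes S: "is_ssq (S :: 'a::field ssq_space)" and T: "is_ssq T"
  shows "coeff_list (ssq_orth S T) = coeff_list S @ coeff_list T"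
proof -
  let ?m = "sdim S" and ?n = "sdim T"
  have zero: "sq S (\<lambda>i. 0) = 0" "sq' S (\<lambda>i. 0) = 0" "sq T (\<lambda>i. 0) = 0" "sq' T (\<lambda>i. 0) = 0"
    using S T by (auto simp: is_ssq_def intro: ts_qform_zero)
  have left: "diag_coeff (ssq_orth S T) i = diag_coeff S i \<and> diag_coeff' (ssq_orth S T) i = diag_coeff' S i"
    if "i < ?m" for i
  proof -
    have "vleft ?m (unit_vec i) = (unit_vec i :: nat \<Rightarrow> 'a)" "vright ?m ?n (unit_vec i :: nat \<Rightarrow> 'a) = (\<lambda>j. 0)"
      using that by (auto simp: vleft_def vright_def unit_vec_def)
    then show ?thesis by (simp add: diag_coeff_def diag_coeff'_def ssq_orth_def zero)
  qed
  have right: "diag_coeff (ssq_orth S T) i = diag_coeff T (i - ?m) \<and>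
      diag_coeff' (ssq_orth S T) i = diag_coeff' T (i - ?m)" if "?m \<le> i" "i < ?m + ?n" for i
  proof -
    have "vleft ?m (unit_vec i :: nat \<Rightarrow> 'a) = (\<lambda>j. 0)" "vright ?m ?n (unit_vec i) = (unit_vec (i - ?m) :: nat \<Rightarrow> 'a)"
      using that by (auto simp: vleft_def vright_def unit_vec_def fun_eq_iff)
    then show ?thesis by (simp add: diag_coeff_def diag_coeff'_def ssq_orth_def zero)
  qed
  show ?thesis
    by (intro nth_equalityI) (auto simp: coeff_list_def nth_append left right)
qed

lemma tens_inv_orth:
  "is_ssq S \<Longrightarrow> is_ssq T \<Longrightarrow> tens_inv (ssq_orth S T) = (\<lambda>p. tens_inv S p + tens_inv T p)"
  by (simp add: tens_inv_def coeff_list_orth gen_count_append)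

lemma pairing_split:
  "pairing (m + n) \<phi> x = pairing m (vleft m \<phi>) (vleft m x) + pairing n (vright m n \<phi>) (vright m n x)"
  by (simp add: pairing_def sum_lessThan_add vleft_def vright_def)

lemma annihilator_orth:
  assumes U1: "is_subspace m U1" and U2: "is_subspace n U2"
    and \<phi>: "\<phi> \<in> annihilator (m + n) {x \<in> vecs (m + n). vleft m x \<in> U1 \<and> vright m n x \<in> U2}"
  shows "vleft m \<phi> \<in> annihilator m U1" and "vright m n \<phi> \<in> annihilator n U2"
proof -
  have "pairing m (vleft m \<phi>) u = 0" if u: "u \<in> U1" for u
  proof -
    have "u \<in> vecs m" using u U1 by (auto simp: is_subspace_def)
    then have "vleft m u = u" "vright m n u = (\<lambda>i. 0)"
      by (auto simp: vleft_def vright_def vecs_def fun_eq_iff)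
    moreover have "u \<in> vecs (m + n)" using \<open>u \<in> vecs m\<close> by (simp add: vecs_def)
    ultimately have "pairing (m + n) \<phi> u = 0"
      using \<phi> u U2 unfolding annihilator_def is_subspace_def by auto
    then show ?thesis
      using pairing_split[of m n \<phi> u] \<open>vleft m u = u\<close> \<open>vright m n u = (\<lambda>i. 0)\<close>
      by (simp add: pairing_def)
  qed
  then show "vleft m \<phi> \<in> annihilator m U1" by (simp add: annihilator_def vleft_in_vecs)
  have "pairing n (vright m n \<phi>) u = 0" if u: "u \<in> U2" for u
  proof -
    define x where "x = (\<lambda>i. if i < m then 0 else u (i - m))"
    have "u \<in> vecs n" using u U2 by (auto simp: is_subspace_def)
    then have x: "vleft m x = (\<lambda>i. 0)" "vright m n x = u" "x \<in> vecs (m + n)"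
      by (auto simp: x_def vleft_def vright_def vecs_def fun_eq_iff)
    then have "pairing (m + n) \<phi> x = 0"
      using \<phi> u U1 unfolding annihilator_def is_subspace_def by auto
    then show ?thesis
      using pairing_split[of m n \<phi> x] x by (simp add: pairing_def)
  qed
  then show "vright m n \<phi> \<in> annihilator n U2" by (simp add: annihilator_def vright_in_vecs)
qed

lemma metabolic_orth:
  assumes "ssq_metabolic S" and "ssq_metabolic T"
  shows "ssq_metabolic (ssq_orth S T)"
proof -
  let ?m = "sdim S" and ?n = "sdim T"
  obtain U1 where U1: "is_subspace ?m U1" "\<forall>u\<in>U1. sq S u = 0" "\<forall>\<phi>\<in>annihilator ?m U1. sq' S \<phi> = 0"
    using assms(1) by (auto simp: ssq_metabolic_def)
  obtain U2 where U2: "is_subspace ?n U2" "\<forall>u\<in>U2. sq T u = 0" "\<forall>\<phi>\<in>annihilator ?n U2. sq' T \<phi> = 0"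
    using assms(2) by (auto simp: ssq_metabolic_def)
  let ?U = "{x \<in> vecs (?m + ?n). vleft ?m x \<in> U1 \<and> vright ?m ?n x \<in> U2}"
  have "is_subspace (?m + ?n) ?U"
    using U1(1) U2(1) by (auto simp: is_subspace_def vecs_def vleft_linear vright_linear)
  moreover have "\<forall>x\<in>?U. sq (ssq_orth S T) x = 0"
    using U1(2) U2(2) by (simp add: ssq_orth_def)
  moreover have "\<forall>\<phi>\<in>annihilator (?m + ?n) ?U. sq' (ssq_orth S T) \<phi> = 0"
    using annihilator_orth[OF U1(1) U2(1)] U1(3) U2(3) by (simp add: ssq_orth_def)
  ultimately show ?thesis
    unfolding ssq_metabolic_def sdim_ssq_orth by blast
qed

definition diag_space :: "('a::field \<times> 'a) list \<Rightarrow> 'a ssq_space" where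
  "diag_space L = \<lparr>sdim = length L,
     sq = (\<lambda>x. \<Sum>i<length L. fst (L ! i) * (x i * x i)),
     sq' = (\<lambda>\<phi>. \<Sum>i<length L. snd (L ! i) * (\<phi> i * \<phi> i))\<rparr>"

lemma ts_qform_diag:
  assumes char2: "(2::'a::field) = 0"
  shows "ts_qform n (\<lambda>x. \<Sum>i<n. (a i :: 'a) * (x i * x i))"
  unfolding ts_qform_def
  by (simp add: algebra_simps sum.distrib sum_distrib_left char2)

lemma is_ssq_diag_space: "(2::'a::field) = 0 \<Longrightarrow> is_ssq (diag_space (L :: ('a \<times> 'a) list))"
  by (simp add: is_ssq_def diag_space_def ts_qform_diag)

lemma coeff_list_diag_space: "coeff_list (diag_space L) = L"
proof (rule nth_equalityI)
  show "length (coeff_list (diag_space L)) = length L"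
    by (simp add: coeff_list_def diag_space_def)
next
  fix i assume "i < length (coeff_list (diag_space L))"
  then have "i < length L" by (simp add: coeff_list_def diag_space_def)
  then show "coeff_list (diag_space L) ! i = L ! i"
    by (simp add: coeff_list_def diag_space_def diag_coeff_def diag_coeff'_def unit_vec_def
        if_distrib cong: if_cong)
qed

lemma tens_inv_diag_space: "tens_inv (diag_space L) = gen_count L"
  by (simp add: tens_inv_def coeff_list_diag_space)

lemma onedim_eq_diag_space: "onedim a a' = diag_space [(a, a')]"
  by (simp add: onedim_def diag_space_def)

lemma diag_space_append: "diag_space (L @ L') = ssq_orth (diag_space L) (diag_space L')"
proof -
  let ?m = "length L" and ?n = "length L'"
  have "(\<Sum>i<?m + ?n. c ((L @ L') ! i) * (x i * x i)) =
      (\<Sum>i<?m. c (L ! i) * (vleft ?m x i * vleft ?m x i)) +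
      (\<Sum>i<?n. c (L' ! i) * (vright ?m ?n x i * vright ?m ?n x i))" for c :: "'a \<times> 'a \<Rightarrow> 'a" and x
    unfolding sum_lessThan_add
    by (intro arg_cong2[where f = "(+)"] sum.cong) (simp_all add: nth_append vleft_def vright_def)
  from this[of fst] this[of snd] show ?thesis
    by (simp add: diag_space_def ssq_orth_def)
qed

section \<open>Spaces with the same coefficients are isometric\<close>

lemma permutation_matrix:
  assumes f: "bij_betw f {..<n} {..<n}"
  defines "M \<equiv> \<lambda>i j. if i = f j then (1::'a::field) else 0"
  shows "matapp n M x = (\<lambda>i. if i < n then x (inv_into {..<n} f i) else 0)"
    and "matdual n M \<phi> = (\<lambda>j. if j < n then \<phi> (f j) else 0)"
    and "bij_betw (matapp n M) (vecs n) (vecs n)"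
proof -
  let ?g = "inv_into {..<n} f"
  have fn: "f j < n" if "j < n" for j using f that by (auto dest: bij_betwE)
  have gf: "?g (f j) = j" if "j < n" for j using f that by (simp add: bij_betw_inv_into_left)
  have fg: "f (?g i) = i" if "i < n" for i using f that by (simp add: bij_betw_inv_into_right)
  have gn: "?g i < n" if "i < n" for i
    using f that by (metis bij_betwE bij_betw_inv_into lessThan_iff)
  show app: "matapp n M x = (\<lambda>i. if i < n then x (?g i) else 0)" for x
  proof -
    have "(\<Sum>j<n. M i j * x j) = x (?g i)" if "i < n" for i
    proof -
      have "(\<Sum>j<n. M i j * x j) = (\<Sum>j<n. if f j = i then x j else 0)"
        by (intro sum.cong) (auto simp: M_def)
      also have "\<dots> = (\<Sum>j<n. if j = ?g i then x j else 0)"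
        using that by (intro sum.cong) (auto simp: gf fg)
      finally show ?thesis using gn[OF that] by simp
    qed
    then show ?thesis by (simp add: matapp_def fun_eq_iff)
  qed
  show "matdual n M \<phi> = (\<lambda>j. if j < n then \<phi> (f j) else 0)"
    using fn by (simp add: matdual_def M_def fun_eq_iff if_distrib[of "\<lambda>c. c * _"] cong: if_cong)
  show "bij_betw (matapp n M) (vecs n) (vecs n)"
    by (rule bij_betw_byWitness[where f' = "\<lambda>y j. if j < n then y (f j) else 0"])
      (auto simp: app vecs_def fun_eq_iff gf fg fn gn)
qed

lemma isometric_if_same_coeffs:
  assumes S: "is_ssq (S :: 'a::field ssq_space)" and T: "is_ssq T"
    and eq: "mset (coeff_list S) = mset (coeff_list T)"
  shows "ssq_isometric S T"
proof -
  let ?n = "sdim S"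
  have "length (coeff_list S) = length (coeff_list T)" using eq by (metis size_mset)
  then have n: "sdim T = ?n" by (simp add: coeff_list_def)
  obtain f where f: "bij_betw f {..<?n} {..<?n}" and fe: "\<forall>i<?n. coeff_list S ! i = coeff_list T ! f i"
    using permutation_Ex_bij[OF eq] n by (auto simp: coeff_list_def)
  have fn: "f j < ?n" if "j < ?n" for j using f that by (auto dest: bij_betwE)
  have coeff: "diag_coeff S i = diag_coeff T (f i)" "diag_coeff' S i = diag_coeff' T (f i)" if "i < ?n" for i
    using fe that fn[OF that] n by (auto simp: coeff_list_def)
  define M where "M = (\<lambda>i j. if i = f j then (1::'a) else 0)"
  note perm = permutation_matrix[OF f, where 'a = 'a, folded M_def]
  have "sq T (matapp ?n M x) = sq S x" if x: "x \<in> vecs ?n" for x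
  proof -
    have "sq T (matapp ?n M x) = (\<Sum>i<?n. diag_coeff T i * (matapp ?n M x i * matapp ?n M x i))"
      using sq_diagonal[OF T] by (simp add: n matapp_in_vecs)
    also have "\<dots> = (\<Sum>i<?n. diag_coeff T i * (x (inv_into {..<?n} f i) * x (inv_into {..<?n} f i)))"
      by (intro sum.cong) (simp_all add: perm(1))
    also have "\<dots> = (\<Sum>j<?n. diag_coeff T (f j) *
        (x (inv_into {..<?n} f (f j)) * x (inv_into {..<?n} f (f j))))"
      by (rule sum.reindex_bij_betw[OF f, symmetric])
    also have "\<dots> = (\<Sum>j<?n. diag_coeff T (f j) * (x j * x j))"
      using f by (intro sum.cong) (simp_all add: bij_betw_inv_into_left)
    also have "\<dots> = sq S x" using sq_diagonal[OF S x] by (simp add: coeff)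
    finally show ?thesis .
  qed
  moreover have "sq' S (matdual ?n M \<phi>) = sq' T \<phi>" if \<phi>: "\<phi> \<in> vecs ?n" for \<phi>
  proof -
    have "sq' S (matdual ?n M \<phi>) = (\<Sum>j<?n. diag_coeff' S j * (matdual ?n M \<phi> j * matdual ?n M \<phi> j))"
      by (rule sq'_diagonal[OF S matdual_in_vecs])
    also have "\<dots> = (\<Sum>j<?n. diag_coeff' T (f j) * (\<phi> (f j) * \<phi> (f j)))"
      by (intro sum.cong) (simp_all add: perm(2) coeff)
    also have "\<dots> = (\<Sum>i<?n. diag_coeff' T i * (\<phi> i * \<phi> i))"
      by (rule sum.reindex_bij_betw[OF f])
    also have "\<dots> = sq' T \<phi>"
      using sq'_diagonal[OF T] \<phi> n by simp
    finally show ?thesis .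
  qed
  ultimately show ?thesis
    using n perm(3) by (auto simp: ssq_isometric_def)
qed

section \<open>The defining relations of the tensor product are metabolic\<close>

lemma is_subspace_line:
  assumes "w \<in> vecs n"
  shows "is_subspace n (range (\<lambda>t i. t * w i))"
  unfolding is_subspace_def
proof (intro conjI ballI allI)
  show "range (\<lambda>t i. t * w i) \<subseteq> vecs n" using assms by (auto simp: vecs_def)
  show "(\<lambda>i. 0) \<in> range (\<lambda>t i. t * w i)" by (rule range_eqI[where x = 0]) simp
next
  fix x y assume "x \<in> range (\<lambda>t i. t * w i)" "y \<in> range (\<lambda>t i. t * w i)"
  then obtain s t where "x = (\<lambda>i. s * w i)" "y = (\<lambda>i. t * w i)" by blast
  then show "(\<lambda>i. x i + y i) \<in> range (\<lambda>t i. t * w i)"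
    by (intro range_eqI[where x = "s + t"]) (simp add: algebra_simps)
next
  fix x c assume "x \<in> range (\<lambda>t i. t * w i)"
  then obtain s where "x = (\<lambda>i. s * w i)" by blast
  then show "(\<lambda>i. c * x i) \<in> range (\<lambda>t i. t * w i)"
    by (intro range_eqI[where x = "c * s"]) (simp add: algebra_simps)
qed

lemma is_subspace_kernel: "is_subspace n {x \<in> vecs n. pairing n w x = 0}"
  by (auto simp: is_subspace_def vecs_def pairing_def algebra_simps sum.distrib
      sum_distrib_left[symmetric])

lemma metabolic_isotropic_line:
  assumes S: "is_ssq S" and w: "w \<in> vecs (sdim S)" and "sq S w = 0"
    and ann: "\<And>\<phi>. \<phi> \<in> vecs (sdim S) \<Longrightarrow> pairing (sdim S) \<phi> w = 0 \<Longrightarrow> sq' S \<phi> = 0"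
  shows "ssq_metabolic S"
  unfolding ssq_metabolic_def
proof (intro exI conjI ballI)
  let ?U = "range (\<lambda>t i. t * w i)"
  show "is_subspace (sdim S) ?U" by (rule is_subspace_line[OF w])
  show "sq S u = 0" if "u \<in> ?U" for u
  proof -
    obtain t where u: "u = (\<lambda>i. t * w i)" using \<open>u \<in> ?U\<close> by blast
    have "ts_qform (sdim S) (sq S)" using S by (simp add: is_ssq_def)
    then have "sq S u = t * t * sq S w" unfolding u by (rule ts_qform_scale[OF _ w])
    then show ?thesis using \<open>sq S w = 0\<close> by simp
  qed
  show "sq' S \<phi> = 0" if \<phi>: "\<phi> \<in> annihilator (sdim S) ?U" for \<phi>
  proof (rule ann)
    show "\<phi> \<in> vecs (sdim S)" using \<phi> by (simp add: annihilator_def)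
    have "w \<in> ?U" using range_eqI[of w "\<lambda>t i. t * w i" 1] by simp
    then show "pairing (sdim S) \<phi> w = 0" using \<phi> unfolding annihilator_def by blast
  qed
qed

lemma metabolic_diag_nil: "ssq_metabolic (diag_space [])"
  unfolding ssq_metabolic_def is_subspace_def
  by (rule exI[where x = "{\<lambda>i. 0}"]) (simp add: diag_space_def vecs_def)

lemma metabolic_diag_double:
  assumes char2: "(2::'a::field) = 0"
  shows "ssq_metabolic (diag_space [(a :: 'a, c), (a, c)])"
proof (rule metabolic_isotropic_line[OF is_ssq_diag_space[OF char2], where w = "\<lambda>i. if i < 2 then 1 else 0"])
  fix \<phi> :: "nat \<Rightarrow> 'a"
  assume "pairing (sdim (diag_space [(a, c), (a, c)])) \<phi> (\<lambda>i. if i < 2 then 1 else 0) = 0"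
  then have "\<phi> 0 = \<phi> 1"
    by (simp add: diag_space_def pairing_def eval_nat_numeral char2_add_eq_0_iff[OF char2])
  then show "sq' (diag_space [(a, c), (a, c)]) \<phi> = 0"
    by (simp add: diag_space_def eval_nat_numeral char2_add_self[OF char2])
qed (simp_all add: diag_space_def vecs_def eval_nat_numeral char2_add_self[OF char2])

lemma metabolic_diag_add_left:
  assumes char2: "(2::'a::field) = 0"
  shows "ssq_metabolic (diag_space [(a + b :: 'a, c), (a, c), (b, c)])"
proof (rule metabolic_isotropic_line[OF is_ssq_diag_space[OF char2], where w = "\<lambda>i. if i < 3 then 1 else 0"])
  fix \<phi> :: "nat \<Rightarrow> 'a"
  assume "pairing (sdim (diag_space [(a + b, c), (a, c), (b, c)])) \<phi> (\<lambda>i. if i < 3 then 1 else 0) = 0"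
  then have "\<phi> 0 + \<phi> 1 + \<phi> 2 = 0"
    by (simp add: diag_space_def pairing_def eval_nat_numeral add.assoc)
  then have "\<phi> 0 * \<phi> 0 + \<phi> 1 * \<phi> 1 + \<phi> 2 * \<phi> 2 = 0"
    by (metis char2_square_add[OF char2] mult_zero_left)
  then show "sq' (diag_space [(a + b, c), (a, c), (b, c)]) \<phi> = 0"
    by (simp add: diag_space_def eval_nat_numeral add.assoc flip: distrib_left)
qed (simp_all add: diag_space_def vecs_def eval_nat_numeral algebra_simps char2_add_self[OF char2])

lemma metabolic_diag_square_swap:
  assumes char2: "(2::'a::field) = 0"
  shows "ssq_metabolic (diag_space [(s * s * a :: 'a, c), (a, s * s * c)])"
proof (rule metabolic_isotropic_line[OF is_ssq_diag_space[OF char2],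
      where w = "\<lambda>i. if i = 0 then 1 else if i = 1 then s else 0"])
  fix \<phi> :: "nat \<Rightarrow> 'a"
  assume "pairing (sdim (diag_space [(s * s * a, c), (a, s * s * c)])) \<phi>
    (\<lambda>i. if i = 0 then 1 else if i = 1 then s else 0) = 0"
  then have "\<phi> 0 = \<phi> 1 * s"
    by (simp add: diag_space_def pairing_def eval_nat_numeral char2_add_eq_0_iff[OF char2])
  then show "sq' (diag_space [(s * s * a, c), (a, s * s * c)]) \<phi> = 0"
    using char2_add_self[OF char2, of "s * s * c * (\<phi> 1 * \<phi> 1)"]
    by (simp add: diag_space_def eval_nat_numeral mult_ac)
qed (use char2_add_self[OF char2, of "s * s * a"] in
    \<open>simp_all add: diag_space_def vecs_def eval_nat_numeral mult_ac\<close>)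

lemma metabolic_diag_add_right:
  assumes char2: "(2::'a::field) = 0"
  shows "ssq_metabolic (diag_space [(a :: 'a, c + d), (a, c), (a, d)])"
  unfolding ssq_metabolic_def
proof (intro exI conjI ballI)
  let ?L = "[(a, c + d), (a, c), (a, d)]" and ?w = "\<lambda>i. if i < 3 then 1 else 0 :: 'a"
  let ?U = "{x \<in> vecs 3. pairing 3 ?w x = 0}"
  have n: "sdim (diag_space ?L) = 3" by (simp add: diag_space_def)
  show "is_subspace (sdim (diag_space ?L)) ?U" unfolding n by (rule is_subspace_kernel)
  show "sq (diag_space ?L) u = 0" if "u \<in> ?U" for u
  proof -
    have "u 0 + u 1 + u 2 = 0"
      using that by (simp add: pairing_def eval_nat_numeral add.assoc)
    then have "u 0 * u 0 + u 1 * u 1 + u 2 * u 2 = 0"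
      by (metis char2_square_add[OF char2] mult_zero_left)
    then show ?thesis by (simp add: diag_space_def eval_nat_numeral add.assoc flip: distrib_left)
  qed
  show "sq' (diag_space ?L) \<phi> = 0" if \<phi>: "\<phi> \<in> annihilator (sdim (diag_space ?L)) ?U" for \<phi>
  proof -
    have "(\<lambda>i. if i = 0 \<or> i = j then 1 else 0) \<in> ?U" if "j = 1 \<or> j = 2" for j :: nat
      using that char2_add_self[OF char2, of 1] by (auto simp: vecs_def pairing_def eval_nat_numeral)
    then have "\<phi> 0 + \<phi> 1 = 0" "\<phi> 0 + \<phi> 2 = 0"
      using \<phi> unfolding n annihilator_def by (force simp: pairing_def eval_nat_numeral)+
    then have "\<phi> 1 = \<phi> 0" "\<phi> 2 = \<phi> 0"
      by (simp_all add: char2_add_eq_0_iff[OF char2])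
    then show ?thesis
      using char2_add_self[OF char2, of "(c + d) * (\<phi> 0 * \<phi> 0)"]
      by (simp add: diag_space_def eval_nat_numeral algebra_simps)
  qed
qed

lemma metabolic_diag_append:
  "ssq_metabolic (diag_space L) \<Longrightarrow> ssq_metabolic (diag_space L') \<Longrightarrow> ssq_metabolic (diag_space (L @ L'))"
  by (simp add: diag_space_append metabolic_orth)

lemma tens_rel_metabolic_diff:
  fixes r :: "'a::field \<times> 'a \<Rightarrow> int"
  assumes char2: "(2::'a) = 0"
  shows "r \<in> tens_rel \<Longrightarrow> \<exists>P N. ssq_metabolic (diag_space P) \<and> ssq_metabolic (diag_space N) \<and>
     r = (\<lambda>p. gen_count P p - gen_count N p :: int)"
proof (induction rule: tens_rel.induct)
  case (ladd a b c)
  show ?case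
    using metabolic_diag_add_left[OF char2, of a b c]
      metabolic_diag_append[OF metabolic_diag_double[OF char2, of a c] metabolic_diag_double[OF char2, of b c]]
    by (intro exI[where x = "[(a + b, c), (a, c), (b, c)]"]
        exI[where x = "[(a, c), (a, c)] @ [(b, c), (b, c)]"])
      (auto simp: gen_count_def gen_def fun_eq_iff)
next
  case (radd a c d)
  show ?case
    using metabolic_diag_add_right[OF char2, of a c d]
      metabolic_diag_append[OF metabolic_diag_double[OF char2, of a c] metabolic_diag_double[OF char2, of a d]]
    by (intro exI[where x = "[(a, c + d), (a, c), (a, d)]"]
        exI[where x = "[(a, c), (a, c)] @ [(a, d), (a, d)]"])
      (auto simp: gen_count_def gen_def fun_eq_iff)
next
  case (bal s a c)
  show ?case
    using metabolic_diag_square_swap[OF char2, of s a c] metabolic_diag_double[OF char2, of a "s * s * c"]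
    by (intro exI[where x = "[(s * s * a, c), (a, s * s * c)]"]
        exI[where x = "[(a, s * s * c), (a, s * s * c)]"])
      (auto simp: gen_count_def gen_def fun_eq_iff)
next
  case zero
  show ?case using metabolic_diag_nil by (auto simp: gen_count_def fun_eq_iff)
next
  case (add f g)
  then obtain P N P' N' where "ssq_metabolic (diag_space P)" "ssq_metabolic (diag_space N)"
    "ssq_metabolic (diag_space P')" "ssq_metabolic (diag_space N')"
    "f = (\<lambda>p. gen_count P p - gen_count N p)" "g = (\<lambda>p. gen_count P' p - gen_count N' p)"
    by blast
  then show ?case
    by (intro exI[where x = "P @ P'"] exI[where x = "N @ N'"])
      (auto simp: metabolic_diag_append gen_count_append fun_eq_iff)
next
  case (neg f)
  then show ?case by (metis minus_diff_eq)
qed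

section \<open>Witt equivalence is tensor equivalence\<close>

lemma witt_equiv_imp_tens_equiv:
  assumes char2: "(2::'a::field) = 0" and S: "is_ssq (S :: 'a ssq_space)" and T: "is_ssq T"
    and "witt_equiv S T"
  shows "tens_equiv (tens_inv S) (tens_inv T)"
proof -
  obtain M M' where M: "is_ssq M" "ssq_metabolic M" and M': "is_ssq M'" "ssq_metabolic M'"
    and iso: "ssq_isometric (ssq_orth S M) (ssq_orth T M')"
    using assms(4) by (auto simp: witt_equiv_def)
  have "tens_equiv (tens_inv S) (\<lambda>p. tens_inv S p + tens_inv M p)"
    using tens_equiv_add[OF tens_equiv_refl tens_equiv_sym[OF metabolic_tens_inv[OF char2 M]]]
    by simp
  also have "tens_equiv \<dots> (\<lambda>p. tens_inv T p + tens_inv M' p)"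
    using tens_inv_isometric[OF is_ssq_orth[OF S M(1)] is_ssq_orth[OF T M'(1)] iso]
    by (simp add: tens_inv_orth S T M M')
  also have "tens_equiv \<dots> (tens_inv T)"
    using tens_equiv_add[OF tens_equiv_refl metabolic_tens_inv[OF char2 M']] by simp
  finally show ?thesis .
qed

text \<open>A relation \<open>tens_inv S - tens_inv T = P - N\<close> with metabolic \<open>P\<close>, \<open>N\<close> says that
  \<open>S \<perp> N\<close> and \<open>T \<perp> P\<close> have the same coefficients, hence are isometric.\<close>
lemma tens_equiv_imp_witt_equiv:
  assumes char2: "(2::'a::field) = 0" and S: "is_ssq (S :: 'a ssq_space)" and T: "is_ssq T"
    and "tens_equiv (tens_inv S) (tens_inv T)"
  shows "witt_equiv S T"
proof -
  obtain P N where P: "ssq_metabolic (diag_space P)" and N: "ssq_metabolic (diag_space N)"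
    and r: "(\<lambda>p. tens_inv S p - tens_inv T p) = (\<lambda>p. gen_count P p - gen_count N p)"
    using tens_rel_metabolic_diff[OF char2] assms(4) unfolding tens_equiv_def by blast
  have "mset (coeff_list (ssq_orth S (diag_space N))) = mset (coeff_list (ssq_orth T (diag_space P)))"
  proof (rule multiset_eqI)
    fix p
    have "tens_inv S p + gen_count N p = tens_inv T p + gen_count P p"
      using fun_cong[OF r, of p] by simp
    then show "count (mset (coeff_list (ssq_orth S (diag_space N)))) p =
        count (mset (coeff_list (ssq_orth T (diag_space P)))) p"
      by (simp add: coeff_list_orth S T is_ssq_diag_space[OF char2] coeff_list_diag_space
          tens_inv_def gen_count_def)
  qed
  then have "ssq_isometric (ssq_orth S (diag_space N)) (ssq_orth T (diag_space P))"
    by (intro isometric_if_same_coeffs is_ssq_orth S T is_ssq_diag_space[OF char2])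
  then show ?thesis
    using is_ssq_diag_space[OF char2] P N by (auto simp: witt_equiv_def)
qed

lemma witt_class_eq:
  assumes "(2::'a::field) = 0" and "is_ssq (S :: 'a ssq_space)"
  shows "witt_class S = {T. is_ssq T \<and> tens_equiv (tens_inv S) (tens_inv T)}"
  using assms witt_equiv_imp_tens_equiv tens_equiv_imp_witt_equiv by (auto simp: witt_class_def)

lemma witt_class_eq_iff:
  assumes char2: "(2::'a::field) = 0" and S: "is_ssq (S :: 'a ssq_space)" and T: "is_ssq T"
  shows "witt_class S = witt_class T \<longleftrightarrow> tens_equiv (tens_inv S) (tens_inv T)"
proof
  assume "witt_class S = witt_class T"
  moreover have "T \<in> witt_class T"
    using T by (simp add: witt_class_eq[OF char2 T] tens_equiv_refl)
  ultimately have "T \<in> witt_class S" by simp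
  then show "tens_equiv (tens_inv S) (tens_inv T)"
    by (simp add: witt_class_eq[OF char2 S])
next
  assume "tens_equiv (tens_inv S) (tens_inv T)"
  then have "tens_equiv (tens_inv S) (tens_inv R) \<longleftrightarrow> tens_equiv (tens_inv T) (tens_inv R)" for R
    by (meson tens_equiv_sym tens_equiv_trans)
  then show "witt_class S = witt_class T"
    by (simp add: witt_class_eq[OF char2 S] witt_class_eq[OF char2 T])
qed

lemma fin_supp_add: "fin_supp f \<Longrightarrow> fin_supp g \<Longrightarrow> fin_supp (\<lambda>p. f p + g p)"
  unfolding fin_supp_def by (rule finite_subset[of _ "{p. f p \<noteq> 0} \<union> {p. g p \<noteq> 0}"]) auto

lemma fin_supp_diff: "fin_supp f \<Longrightarrow> fin_supp g \<Longrightarrow> fin_supp (\<lambda>p. f p - g p)"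
  unfolding fin_supp_def by (rule finite_subset[of _ "{p. f p \<noteq> 0} \<union> {p. g p \<noteq> 0}"]) auto

lemma fin_supp_tens_inv: "fin_supp (tens_inv S)"
  unfolding fin_supp_def tens_inv_def gen_count_def
  by (rule finite_subset[of _ "set (coeff_list S)"]) (auto simp: count_eq_zero_iff)

lemma tclass_eq_tens_equiv: "tclass f = {g. fin_supp g \<and> tens_equiv f g}"
  by (simp add: tclass_def tens_equiv_def)

lemma tclass_eq_iff: "fin_supp f \<Longrightarrow> tclass f = tclass g \<longleftrightarrow> tens_equiv f g"
  unfolding tclass_eq_tens_equiv by (blast intro: tens_equiv_refl tens_equiv_sym tens_equiv_trans)

lemma tensor_grp_mult_tclass:
  assumes f: "fin_supp f" and g: "fin_supp g"
  shows "tclass f \<otimes>\<^bsub>tensor_grp TYPE('a::field)\<^esub> tclass g = tclass (\<lambda>p. f p + g p)"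
proof -
  have "h \<in> {(\<lambda>p. f' p + g' p) | f' g'. f' \<in> tclass f \<and> g' \<in> tclass g}"
    if h: "h \<in> tclass (\<lambda>p. f p + g p)" for h
  proof -
    have "f \<in> tclass f" using f by (simp add: tclass_eq_tens_equiv tens_equiv_refl)
    moreover have "(\<lambda>p. h p - f p) \<in> tclass g"
      using h fin_supp_diff[OF _ f, of h] by (simp add: tclass_def algebra_simps)
    ultimately show ?thesis by force
  qed
  then show ?thesis
    by (auto simp: tensor_grp_def tclass_eq_tens_equiv intro: fin_supp_add tens_equiv_add)
qed

lemma tens_equiv_scale:
  "tens_equiv f g \<Longrightarrow> tens_equiv (\<lambda>p. int m * f p) (\<lambda>p. int m * g p)"
  by (induction m) (simp_all add: tens_equiv_refl distrib_right tens_equiv_add)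

text \<open>In characteristic 2 a generator is its own negative, so integer multiples of it are
  represented by lists.\<close>
lemma tens_equiv_int_gen:
  assumes char2: "(2::'a::field) = 0"
  shows "tens_equiv (\<lambda>p. k * gen (a::'a) c p) (gen_count (replicate (nat \<bar>k\<bar>) (a, c)))"
proof -
  have count: "gen_count (replicate m (a, c)) = (\<lambda>p. int m * gen a c p)" for m
    by (auto simp: gen_count_def gen_def fun_eq_iff)
  have "tens_equiv (\<lambda>p. - gen a c p) (gen a c)"
    using tens_rel.neg[OF gen_double[OF char2, unfolded tens_equiv_def]] by (simp add: tens_equiv_def)
  then show ?thesis
    using tens_equiv_scale[of "\<lambda>p. - gen a c p" "gen a c" "nat \<bar>k\<bar>"]
    by (cases "k \<ge> 0") (simp_all add: count tens_equiv_refl)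
qed

lemma tens_equiv_gen_count:
  assumes char2: "(2::'a::field) = 0" and "fin_supp (f :: 'a \<times> 'a \<Rightarrow> int)"
  obtains L where "tens_equiv f (gen_count L)"
proof -
  have "finite A \<Longrightarrow> {p. f p \<noteq> 0} \<subseteq> A \<Longrightarrow> \<exists>L. tens_equiv f (gen_count L)" for A and f :: "'a \<times> 'a \<Rightarrow> int"
  proof (induction A arbitrary: f rule: finite_induct)
    case empty
    then have "f = gen_count []" by (auto simp: gen_count_def fun_eq_iff)
    then show ?case using tens_equiv_refl by blast
  next
    case (insert x A)
    obtain a c where x: "x = (a, c)" by fastforce
    define g where "g = f(x := 0)"
    have "{p. g p \<noteq> 0} \<subseteq> A" using insert.prems by (auto simp: g_def split: if_splits)
    then obtain L where "tens_equiv g (gen_count L)" using insert.IH by blast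
    then have "tens_equiv (\<lambda>p. g p + f x * gen a c p)
        (\<lambda>p. gen_count L p + gen_count (replicate (nat \<bar>f x\<bar>) x) p)"
      unfolding x by (rule tens_equiv_add[OF _ tens_equiv_int_gen[OF char2]])
    moreover have "(\<lambda>p. g p + f x * gen a c p) = f" by (auto simp: g_def gen_def x fun_eq_iff)
    ultimately have "tens_equiv f (gen_count (L @ replicate (nat \<bar>f x\<bar>) x))"
      by (simp add: gen_count_append)
    then show ?case by blast
  qed
  then show ?thesis using assms(2) that unfolding fin_supp_def by blast
qed

text \<open>The map \<open>\<Phi>\<close>: the spaces whose invariant lies in the given class, which form a Witt class
  by \<open>witt_class_eq\<close>.\<close>
definition witt_of_tensor :: "('a::field \<times> 'a \<Rightarrow> int) set \<Rightarrow> 'a ssq_space set" where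
  "witt_of_tensor X = {T. is_ssq T \<and> tclass (tens_inv T) = X}"

lemma witt_of_tensor_tclass:
  assumes char2: "(2::'a::field) = 0" and S: "is_ssq (S :: 'a ssq_space)"
    and "tens_equiv f (tens_inv S)"
  shows "witt_of_tensor (tclass f) = witt_class S"
  using assms(3)
  by (auto simp: witt_of_tensor_def witt_class_eq[OF char2 S] tclass_eq_iff[OF fin_supp_tens_inv]
      intro: tens_equiv_trans tens_equiv_sym)

lemma exists_ssq_tens_equiv:
  assumes char2: "(2::'a::field) = 0" and "fin_supp (f :: 'a \<times> 'a \<Rightarrow> int)"
  obtains S where "is_ssq S" and "tens_equiv f (tens_inv S)"
proof -
  obtain L where "tens_equiv f (gen_count L)" using tens_equiv_gen_count[OF assms] .
  then show ?thesis
    using that is_ssq_diag_space[OF char2, of L] by (simp add: tens_inv_diag_space)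
qed

lemma Wssq_mult_witt_class:
  assumes char2: "(2::'a::field) = 0" and S: "is_ssq (S :: 'a ssq_space)" and T: "is_ssq T"
  shows "witt_class S \<otimes>\<^bsub>Wssq TYPE('a)\<^esub> witt_class T = witt_class (ssq_orth S T)"
proof -
  have "witt_class (ssq_orth S' T') = witt_class (ssq_orth S T)"
    if "S' \<in> witt_class S" "T' \<in> witt_class T" for S' T'
  proof -
    have S': "is_ssq S'" "tens_equiv (tens_inv S) (tens_inv S')"
      and T': "is_ssq T'" "tens_equiv (tens_inv T) (tens_inv T')"
      using that by (simp_all add: witt_class_eq[OF char2 S] witt_class_eq[OF char2 T])
    have "tens_equiv (tens_inv (ssq_orth S' T')) (tens_inv (ssq_orth S T))"
      using tens_equiv_sym[OF tens_equiv_add[OF S'(2) T'(2)]] by (simp add: tens_inv_orth S T S'(1) T'(1))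
    then show ?thesis
      by (simp add: witt_class_eq_iff[OF char2] is_ssq_orth S T S'(1) T'(1))
  qed
  moreover have "S \<in> witt_class S" "T \<in> witt_class T"
    using S T by (simp_all add: witt_class_eq[OF char2] tens_equiv_refl)
  ultimately have "{witt_class (ssq_orth S' T') | S' T'. S' \<in> witt_class S \<and> T' \<in> witt_class T} =
      {witt_class (ssq_orth S T)}"
    by blast
  then show ?thesis by (simp add: Wssq_def)
qed

lemma witt_of_tensor_hom:
  assumes char2: "(2::'a::field) = 0"
  shows "witt_of_tensor \<in> hom (tensor_grp TYPE('a)) (Wssq TYPE('a))"
proof (rule homI)
  fix X assume "X \<in> carrier (tensor_grp TYPE('a))"
  then obtain f where X: "X = tclass f" and f: "fin_supp f" by (auto simp: tensor_grp_def)
  obtain S where "is_ssq S" "tens_equiv f (tens_inv S)" using exists_ssq_tens_equiv[OF char2 f] .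
  then show "witt_of_tensor X \<in> carrier (Wssq TYPE('a))"
    by (auto simp: X Wssq_def witt_of_tensor_tclass[OF char2])
next
  fix X Y assume "X \<in> carrier (tensor_grp TYPE('a))" "Y \<in> carrier (tensor_grp TYPE('a))"
  then obtain f g where X: "X = tclass f" and f: "fin_supp f" and Y: "Y = tclass g" and g: "fin_supp g"
    by (auto simp: tensor_grp_def)
  obtain S where S: "is_ssq S" "tens_equiv f (tens_inv S)" using exists_ssq_tens_equiv[OF char2 f] .
  obtain T where T: "is_ssq T" "tens_equiv g (tens_inv T)" using exists_ssq_tens_equiv[OF char2 g] .
  have "tens_equiv (\<lambda>p. f p + g p) (tens_inv (ssq_orth S T))"
    using tens_equiv_add[OF S(2) T(2)] by (simp add: tens_inv_orth S(1) T(1))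
  then show "witt_of_tensor (X \<otimes>\<^bsub>tensor_grp TYPE('a)\<^esub> Y) =
      witt_of_tensor X \<otimes>\<^bsub>Wssq TYPE('a)\<^esub> witt_of_tensor Y"
    using S T is_ssq_orth[OF S(1) T(1)]
    by (simp add: X Y tensor_grp_mult_tclass f g witt_of_tensor_tclass[OF char2]
        Wssq_mult_witt_class[OF char2])
qed

lemma witt_of_tensor_inj:
  assumes char2: "(2::'a::field) = 0"
  shows "inj_on witt_of_tensor (carrier (tensor_grp TYPE('a)))"
proof (rule inj_onI)
  fix X Y assume "X \<in> carrier (tensor_grp TYPE('a))" "Y \<in> carrier (tensor_grp TYPE('a))"
    and eq: "witt_of_tensor X = witt_of_tensor Y"
  then obtain f g where X: "X = tclass f" and Y: "Y = tclass g" and f: "fin_supp f" and g: "fin_supp g"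
    by (auto simp: tensor_grp_def)
  obtain S where S: "is_ssq S" "tens_equiv f (tens_inv S)" using exists_ssq_tens_equiv[OF char2 f] .
  obtain T where T: "is_ssq T" "tens_equiv g (tens_inv T)" using exists_ssq_tens_equiv[OF char2 g] .
  have "witt_class S = witt_class T"
    using eq by (simp add: X Y witt_of_tensor_tclass[OF char2 S] witt_of_tensor_tclass[OF char2 T])
  then have "tens_equiv (tens_inv S) (tens_inv T)"
    by (simp add: witt_class_eq_iff[OF char2 S(1) T(1)])
  then have "tens_equiv f g"
    using S(2) T(2) by (meson tens_equiv_sym tens_equiv_trans)
  then show "X = Y" using f by (simp add: X Y tclass_eq_iff)
qed

lemma witt_of_tensor_surj:
  assumes char2: "(2::'a::field) = 0"
  shows "witt_of_tensor ` carrier (tensor_grp TYPE('a)) = carrier (Wssq TYPE('a))"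
proof
  show "witt_of_tensor ` carrier (tensor_grp TYPE('a)) \<subseteq> carrier (Wssq TYPE('a))"
    using witt_of_tensor_hom[OF char2] by (auto simp: hom_def)
  show "carrier (Wssq TYPE('a)) \<subseteq> witt_of_tensor ` carrier (tensor_grp TYPE('a))"
  proof
    fix W assume "W \<in> carrier (Wssq TYPE('a))"
    then obtain S where W: "W = witt_class S" and S: "is_ssq S" by (auto simp: Wssq_def)
    then have "W = witt_of_tensor (tclass (tens_inv S))"
      by (simp add: witt_of_tensor_tclass[OF char2 S] tens_equiv_refl)
    then show "W \<in> witt_of_tensor ` carrier (tensor_grp TYPE('a))"
      using fin_supp_tens_inv by (auto simp: tensor_grp_def)
  qed
qed

theorem theorem2p2:
  assumes "CHAR('a::field) = 2"
  shows "\<exists>\<Phi>. \<Phi> \<in> iso (tensor_grp TYPE('a)) (Wssq TYPE('a)) \<and>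
           (\<forall>a a' :: 'a. \<Phi> (pure_tensor a a') = witt_class (onedim a a'))"
proof (intro exI conjI allI)
  have char2: "(2::'a) = 0" using of_nat_CHAR[where 'a = 'a] assms by simp
  show "witt_of_tensor \<in> iso (tensor_grp TYPE('a)) (Wssq TYPE('a))"
    using witt_of_tensor_hom[OF char2] witt_of_tensor_inj[OF char2] witt_of_tensor_surj[OF char2]
    by (simp add: iso_def bij_betw_def)
  fix a a' :: 'a
  have "gen a a' = tens_inv (onedim a a')"
    by (simp add: onedim_eq_diag_space tens_inv_diag_space gen_count_single)
  then show "witt_of_tensor (pure_tensor a a') = witt_class (onedim a a')"
    unfolding pure_tensor_def
    by (intro witt_of_tensor_tclass[OF char2])
      (simp_all add: onedim_eq_diag_space is_ssq_diag_space[OF char2] tens_equiv_refl)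
qed

end
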